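(* Let $K\in\mathbb{N}_+$, let $\mathcal{H}$ be a separable real RKHS over a non-empty set $\mathcal{X}$ with reproducing kernel $\kappa$ that admits a complete interpolating sampling sequence $\{x_\lambda\}_{\lambda\in\Lambda}\subseteq\mathcal{X}$, and let $\mathcal{K}\subseteq\mathcal{H}$ be non-empty and locally compact. Then the set of restrictions to $\mathcal{K}$ of sampling-based neural operators $\hat f:\mathcal{H}\to\mathbb{R}^K$ is dense in $C(\mathcal{K},\mathbb{R}^K)$ for the compact-open topology (uniform convergence on compact subsets).
   Context: A sequence $\{x_\lambda\}_{\lambda\in\Lambda}\subseteq\mathcal{X}$, $\Lambda\subseteq\mathbb{N}$, is sampling if there is $C\ge1$ with $\|f\|/C\le(\sum_{\lambda}|f(x_\lambda)|^2)^{1/2}\le C\|f\|$ for all $f\in\mathcal{H}$; it is interpolating if for every square-summable $(v_\lambda)$ there is $f\in\mathcal{H}$ with $f(x_\lambda)=v_\lambda$ for all $\lambda$; complete interpolating sampling means both. A map $\hat f:\mathcal{H}\to\mathbb{R}^K$ is a sampling-based neural operator (SNO) if there exist $S,L\in\mathbb{N}_+$, points $x_1,\dots,x_S\in\mathcal{X}$, integers $d_0=S,d_1,\dots,d_{L+1}=K$ and affine maps $A_l:\mathbb{R}^{d_l}\to\mathbb{R}^{d_{l+1}}$ such that for all $f\in\mathcal{H}$, $\hat f(f)=A_L\circ(\mathrm{ReLU}\bullet A_{L-1})\circ\cdots\circ(\mathrm{ReLU}\bullet A_1)\big((\langle f,\kappa(\cdot,x_s)\rangle_{\mathcal{H}})_{s=1}^S\big)$,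 with $\mathrm{ReLU}(t)=\max\{t,0\}$ applied componentwise. *)

theory Defs
  imports "HOL-Analysis.Analysis"
begin

text \<open>An RKHS over the (non-empty) index type 'x is modelled as a real Hilbert space 'h
  together with the kernel sections phi x = kappa(.,x) in 'h; an element f is identified
  with the function (\<lambda>x. f \<bullet> phi x) (reproducing property), and this identification must
  be injective, i.e. the elements of 'h really are functions on 'x.\<close>

definition rkhs :: "('x \<Rightarrow> 'h::{real_inner,complete_space}) \<Rightarrow> bool" where
  "rkhs phi \<longleftrightarrow> (\<forall>f g. (\<forall>x. f \<bullet> phi x = g \<bullet> phi x) \<longrightarrow> f = g)"

definition kernel :: "('x \<Rightarrow> 'h::real_inner) \<Rightarrow> 'x \<Rightarrow> 'x \<Rightarrow> real" where
  "kernel phi x y = phi y \<bullet> phi x"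

definition separable_space :: "'h::metric_space itself \<Rightarrow> bool" where
  "separable_space _ \<longleftrightarrow> (\<exists>D::'h set. countable D \<and> closure D = UNIV)"

definition sampling_seq ::
  "('x \<Rightarrow> 'h::real_inner) \<Rightarrow> nat set \<Rightarrow> (nat \<Rightarrow> 'x) \<Rightarrow> bool" where
  "sampling_seq phi \<Lambda> xs \<longleftrightarrow> (\<exists>C\<ge>1. \<forall>f::'h.
      (\<lambda>l. (f \<bullet> phi (xs l))\<^sup>2) summable_on \<Lambda> \<and>
      norm f / C \<le> sqrt (\<Sum>\<^sub>\<infinity>l\<in>\<Lambda>. (f \<bullet> phi (xs l))\<^sup>2) \<and>
      sqrt (\<Sum>\<^sub>\<infinity>l\<in>\<Lambda>. (f \<bullet> phi (xs l))\<^sup>2) \<le> C * norm f)"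

definition interpolating_seq ::
  "('x \<Rightarrow> 'h::real_inner) \<Rightarrow> nat set \<Rightarrow> (nat \<Rightarrow> 'x) \<Rightarrow> bool" where
  "interpolating_seq phi \<Lambda> xs \<longleftrightarrow> (\<forall>v::nat \<Rightarrow> real.
      (\<lambda>l. (v l)\<^sup>2) summable_on \<Lambda> \<longrightarrow> (\<exists>f::'h. \<forall>l\<in>\<Lambda>. f \<bullet> phi (xs l) = v l))"

definition complete_interpolating_sampling ::
  "('x \<Rightarrow> 'h::real_inner) \<Rightarrow> nat set \<Rightarrow> (nat \<Rightarrow> 'x) \<Rightarrow> bool" where
  "complete_interpolating_sampling phi \<Lambda> xs \<longleftrightarrow>
     sampling_seq phi \<Lambda> xs \<and> interpolating_seq phi \<Lambda> xs"

text \<open>Vectors of R^d are represented as nat \<Rightarrow> real, only the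
  first d coordinates being meaningful (others are set to 0). The widths are
  ds = [d_0, d_1, ..., d_{L-1}] with d_0 = S; hidden layer l (l < L-1) is
  ReLU o A_l with A_l : R^{d_l} \<rightarrow> R^{d_(l+1)}, A_l v = W l v + b l; the output layer is
  an affine map R^{d_(L-1)} \<rightarrow> R^K = real^'k.\<close>

definition relu :: "real \<Rightarrow> real" where
  "relu t = max t 0"

definition hidden_layer ::
  "nat \<Rightarrow> nat \<Rightarrow> (nat \<Rightarrow> nat \<Rightarrow> real) \<Rightarrow> (nat \<Rightarrow> real) \<Rightarrow> (nat \<Rightarrow> real) \<Rightarrow> (nat \<Rightarrow> real)" where
  "hidden_layer din dout W b v =
     (\<lambda>i. if i < dout then relu ((\<Sum>j<din. W i j * v j) + b i) else 0)"

definition hidden_layers ::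
  "nat list \<Rightarrow> (nat \<Rightarrow> nat \<Rightarrow> nat \<Rightarrow> real) \<Rightarrow> (nat \<Rightarrow> nat \<Rightarrow> real) \<Rightarrow> (nat \<Rightarrow> real) \<Rightarrow> (nat \<Rightarrow> real)" where
  "hidden_layers ds Ws bs v0 =
     foldl (\<lambda>u l. hidden_layer (ds ! l) (ds ! Suc l) (Ws l) (bs l) u) v0 [0..<length ds - 1]"

definition output_layer ::
  "nat \<Rightarrow> ('k::finite \<Rightarrow> nat \<Rightarrow> real) \<Rightarrow> real^'k \<Rightarrow> (nat \<Rightarrow> real) \<Rightarrow> real^'k" where
  "output_layer d Wout bout v = (\<chi> k. (\<Sum>j<d. Wout k j * v j) + bout $ k)"

definition SNO :: "('x \<Rightarrow> 'h::real_inner) \<Rightarrow> ('h \<Rightarrow> real^'k::finite) \<Rightarrow> bool" where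
  "SNO phi F \<longleftrightarrow> (\<exists>S (pts::nat \<Rightarrow> 'x) (ds::nat list) Ws bs Wout bout.
      S > 0 \<and> ds \<noteq> [] \<and> hd ds = S \<and>
      (\<forall>f. F f = output_layer (last ds) Wout bout
                   (hidden_layers ds Ws bs (\<lambda>s. if s < S then f \<bullet> phi (pts s) else 0))))"

end

theory Submission
  imports Defs
begin

(* The lattice generated by the affine functions f \<mapsto> a + c (f \<bullet> phi x) has the two-point
   interpolation property, because an element f of an RKHS is determined by its values
   f \<bullet> phi x; by the Kakutani-Krein form of the Stone-Weierstrass theorem it is therefore
   uniformly dense on every compact set. Each lattice element is computed by a ReLU network
   reading finitely many samples: since max s t = t + relu (s - t), min s t = s - relu (s - t)
   and t = relu t - relu (-t), one extra hidden layer adds a max and a min of two readouts while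
   passing all previous readouts through. Only the injectivity of f \<mapsto> (f \<bullet> phi x)\<^sub>x is
   used. *)

lemma compact_finite_witnesses:
  fixes u :: "'a::topological_space \<Rightarrow> 'a \<Rightarrow> real"
  assumes "compact C"
    and "\<And>y. y \<in> C \<Longrightarrow> continuous_on C (u y)"
    and "\<And>y. y \<in> C \<Longrightarrow> u y y < 0"
  shows "\<exists>Y\<subseteq>C. finite Y \<and> (\<forall>z\<in>C. \<exists>y\<in>Y. u y z < 0)"
proof -
  have "\<exists>U. open U \<and> U \<inter> C = u y -` {..<0} \<inter> C" if "y \<in> C" for y
    using assms(2)[OF that] by (meson continuous_on_open_invariant open_lessThan)
  then have "\<forall>y\<in>C. \<exists>U. open U \<and> U \<inter> C = u y -` {..<0} \<inter> C"
    by blast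
  from bchoice[OF this] obtain U
    where open_U: "\<And>y. y \<in> C \<Longrightarrow> open (U y)"
      and U: "\<And>y. y \<in> C \<Longrightarrow> U y \<inter> C = u y -` {..<0} \<inter> C"
    by blast
  have cover: "C \<subseteq> (\<Union>y\<in>C. U y)"
  proof
    fix y
    assume "y \<in> C"
    then have "y \<in> U y \<inter> C"
      using U assms(3) by simp
    then show "y \<in> (\<Union>y\<in>C. U y)"
      using \<open>y \<in> C\<close> by blast
  qed
  obtain Y where Y: "Y \<subseteq> C" "finite Y" "C \<subseteq> (\<Union>y\<in>Y. U y)"
    by (rule compactE_image[OF \<open>compact C\<close> open_U cover])
  have "\<exists>y\<in>Y. u y z < 0" if "z \<in> C" for z
  proof -
    obtain y where "y \<in> Y" "z \<in> U y"
      using Y(3) \<open>z \<in> C\<close> by blast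
    then have "z \<in> u y -` {..<0} \<inter> C"
      using U[of y] Y(1) \<open>z \<in> C\<close> by blast
    then show ?thesis
      using \<open>y \<in> Y\<close> by auto
  qed
  then show ?thesis
    using Y(1,2) by blast
qed

lemma pointwise_Min_mem:
  assumes min_closed: "\<And>h1 h2. h1 \<in> L \<Longrightarrow> h2 \<in> L \<Longrightarrow> (\<lambda>z. min (h1 z) (h2 z)) \<in> L"
    and "finite I" "I \<noteq> {}" "h ` I \<subseteq> L"
  shows "(\<lambda>z. Min ((\<lambda>i. h i z) ` I)) \<in> L"
  using assms(2-4)
proof (induction I rule: finite_ne_induct)
  case (insert i I)
  then show ?case
    using min_closed[of "h i" "\<lambda>z. Min ((\<lambda>i. h i z) ` I)"] by simp
qed simp

lemma pointwise_Max_mem: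
  assumes max_closed: "\<And>h1 h2. h1 \<in> L \<Longrightarrow> h2 \<in> L \<Longrightarrow> (\<lambda>z. max (h1 z) (h2 z)) \<in> L"
    and "finite I" "I \<noteq> {}" "h ` I \<subseteq> L"
  shows "(\<lambda>z. Max ((\<lambda>i. h i z) ` I)) \<in> L"
  using assms(2-4)
proof (induction I rule: finite_ne_induct)
  case (insert i I)
  then show ?case
    using max_closed[of "h i" "\<lambda>z. Max ((\<lambda>i. h i z) ` I)"] by simp
qed simp

lemma lattice_approx_from_above_at:
  fixes L :: "('a::topological_space \<Rightarrow> real) set"
  assumes min_closed: "\<And>h1 h2. h1 \<in> L \<Longrightarrow> h2 \<in> L \<Longrightarrow> (\<lambda>z. min (h1 z) (h2 z)) \<in> L"
    and cont: "\<And>h. h \<in> L \<Longrightarrow> continuous_on C h"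
    and "compact C" "continuous_on C g" "e > 0" "x \<in> C"
    and interp: "\<And>y. y \<in> C \<Longrightarrow> \<exists>h\<in>L. h x = g x \<and> h y = g y"
  shows "\<exists>h\<in>L. h x = g x \<and> (\<forall>z\<in>C. h z < g z + e)"
proof -
  have "\<forall>y\<in>C. \<exists>h. h \<in> L \<and> h x = g x \<and> h y = g y"
    using interp by blast
  from bchoice[OF this] obtain hh where "\<forall>y\<in>C. hh y \<in> L \<and> hh y x = g x \<and> hh y y = g y"
    by blast
  then have hh_L: "\<And>y. y \<in> C \<Longrightarrow> hh y \<in> L"
    and hh_x: "\<And>y. y \<in> C \<Longrightarrow> hh y x = g x"
    and hh_y: "\<And>y. y \<in> C \<Longrightarrow> hh y y = g y"
    by blast+
  have "\<exists>Y\<subseteq>C. finite Y \<and> (\<forall>z\<in>C. \<exists>y\<in>Y. hh y z - g z - e < 0)"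
  proof (rule compact_finite_witnesses[OF \<open>compact C\<close>])
    show "continuous_on C (\<lambda>z. hh y z - g z - e)" if "y \<in> C" for y
      using cont[OF hh_L[OF that]] \<open>continuous_on C g\<close> by (intro continuous_intros)
  qed (simp add: hh_y \<open>e > 0\<close>)
  then obtain Y where Y: "Y \<subseteq> C" "finite Y" "\<forall>z\<in>C. \<exists>y\<in>Y. hh y z - g z - e < 0"
    by blast
  have "Y \<noteq> {}"
    using Y(3) \<open>x \<in> C\<close> by blast
  define h where "h z = Min ((\<lambda>y. hh y z) ` Y)" for z
  have "hh ` Y \<subseteq> L"
    using Y(1) hh_L by blast
  with min_closed Y(2) \<open>Y \<noteq> {}\<close> have "h \<in> L"
    unfolding h_def by (rule pointwise_Min_mem)
  moreover have "h x = g x"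
  proof -
    have "(\<lambda>y. hh y x) ` Y = (\<lambda>_. g x) ` Y"
      using Y(1) hh_x by (intro image_cong) auto
    then show ?thesis
      using \<open>Y \<noteq> {}\<close> by (simp add: h_def image_constant_conv)
  qed
  moreover have "h z < g z + e" if "z \<in> C" for z
  proof -
    obtain y where "y \<in> Y" "hh y z - g z - e < 0"
      using Y(3) \<open>z \<in> C\<close> by blast
    moreover have "h z \<le> hh y z"
      unfolding h_def using Y(2) \<open>y \<in> Y\<close> by simp
    ultimately show ?thesis
      by linarith
  qed
  ultimately show ?thesis
    by blast
qed

lemma lattice_uniform_approx:
  fixes L :: "('a::topological_space \<Rightarrow> real) set"
  assumes min_closed: "\<And>h1 h2. h1 \<in> L \<Longrightarrow> h2 \<in> L \<Longrightarrow> (\<lambda>z. min (h1 z) (h2 z)) \<in> L"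
    and max_closed: "\<And>h1 h2. h1 \<in> L \<Longrightarrow> h2 \<in> L \<Longrightarrow> (\<lambda>z. max (h1 z) (h2 z)) \<in> L"
    and cont: "\<And>h. h \<in> L \<Longrightarrow> continuous_on C h"
    and "compact C" "continuous_on C g" "e > 0"
    and interp: "\<And>x y. x \<in> C \<Longrightarrow> y \<in> C \<Longrightarrow> \<exists>h\<in>L. h x = g x \<and> h y = g y"
    and "L \<noteq> {}"
  shows "\<exists>h\<in>L. \<forall>z\<in>C. \<bar>h z - g z\<bar> < e"
proof (cases "C = {}")
  case True
  then show ?thesis
    using \<open>L \<noteq> {}\<close> by blast
next
  case False
  have "\<forall>x\<in>C. \<exists>h. h \<in> L \<and> h x = g x \<and> (\<forall>z\<in>C. h z < g z + e)"
    using lattice_approx_from_above_at[OF min_closed cont assms(4-6) _ interp] by blast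
  from bchoice[OF this]
  obtain hh where "\<forall>x\<in>C. hh x \<in> L \<and> hh x x = g x \<and> (\<forall>z\<in>C. hh x z < g z + e)"
    by blast
  then have hh_L: "\<And>x. x \<in> C \<Longrightarrow> hh x \<in> L"
    and hh_x: "\<And>x. x \<in> C \<Longrightarrow> hh x x = g x"
    and hh_above: "\<And>x z. x \<in> C \<Longrightarrow> z \<in> C \<Longrightarrow> hh x z < g z + e"
    by blast+
  have "\<exists>Y\<subseteq>C. finite Y \<and> (\<forall>z\<in>C. \<exists>y\<in>Y. g z - hh y z - e < 0)"
  proof (rule compact_finite_witnesses[OF \<open>compact C\<close>])
    show "continuous_on C (\<lambda>z. g z - hh y z - e)" if "y \<in> C" for y
      using cont[OF hh_L[OF that]] \<open>continuous_on C g\<close> by (intro continuous_intros)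
  qed (simp add: hh_x \<open>e > 0\<close>)
  then obtain Y where Y: "Y \<subseteq> C" "finite Y" "\<forall>z\<in>C. \<exists>y\<in>Y. g z - hh y z - e < 0"
    by blast
  have "Y \<noteq> {}"
    using Y(3) False by blast
  define h where "h z = Max ((\<lambda>y. hh y z) ` Y)" for z
  have "hh ` Y \<subseteq> L"
    using Y(1) hh_L by blast
  with max_closed Y(2) \<open>Y \<noteq> {}\<close> have "h \<in> L"
    unfolding h_def by (rule pointwise_Max_mem)
  moreover have "\<bar>h z - g z\<bar> < e" if "z \<in> C" for z
  proof -
    obtain y where "y \<in> Y" and below: "g z - hh y z - e < 0"
      using Y(3) \<open>z \<in> C\<close> by blast
    have "hh y z \<le> h z"
      unfolding h_def using Y(2) \<open>y \<in> Y\<close> by simp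
    have "h z \<in> (\<lambda>y. hh y z) ` Y"
      unfolding h_def using Y(2) \<open>Y \<noteq> {}\<close> by (intro Max_in) auto
    then obtain y' where "y' \<in> Y" "h z = hh y' z"
      by blast
    moreover have "hh y' z < g z + e"
      using Y(1) \<open>y' \<in> Y\<close> \<open>z \<in> C\<close> by (intro hh_above) auto
    ultimately show ?thesis
      using below \<open>hh y z \<le> h z\<close> by linarith
  qed
  ultimately show ?thesis
    by blast
qed

inductive_set evaluation_lattice :: "('x \<Rightarrow> 'h::real_inner) \<Rightarrow> 'x set \<Rightarrow> ('h \<Rightarrow> real) set"
  for phi P
where
  affine: "x \<in> P \<Longrightarrow> (\<lambda>f. a + c * (f \<bullet> phi x)) \<in> evaluation_lattice phi P"
| max: "h1 \<in> evaluation_lattice phi P \<Longrightarrow> h2 \<in> evaluation_lattice phi P \<Longrightarrow>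
    (\<lambda>f. max (h1 f) (h2 f)) \<in> evaluation_lattice phi P"
| min: "h1 \<in> evaluation_lattice phi P \<Longrightarrow> h2 \<in> evaluation_lattice phi P \<Longrightarrow>
    (\<lambda>f. min (h1 f) (h2 f)) \<in> evaluation_lattice phi P"

lemma evaluation_lattice_mono:
  "h \<in> evaluation_lattice phi P \<Longrightarrow> P \<subseteq> Q \<Longrightarrow> h \<in> evaluation_lattice phi Q"
  by (induction rule: evaluation_lattice.induct) (auto intro: evaluation_lattice.intros)

lemma evaluation_lattice_finite_support:
  assumes "h \<in> evaluation_lattice phi P"
  shows "\<exists>Q\<subseteq>P. finite Q \<and> h \<in> evaluation_lattice phi Q"
  using assms
proof (induction rule: evaluation_lattice.induct)
  case (affine x a c)
  then show ?case
    by (intro exI[of _ "{x}"]) (auto intro: evaluation_lattice.affine)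
next
  case (max h1 h2)
  then obtain Q1 Q2 where "Q1 \<subseteq> P" "finite Q1" "h1 \<in> evaluation_lattice phi Q1"
    and "Q2 \<subseteq> P" "finite Q2" "h2 \<in> evaluation_lattice phi Q2"
    by blast
  then show ?case
    by (intro exI[of _ "Q1 \<union> Q2"])
      (auto intro: evaluation_lattice.max evaluation_lattice_mono)
next
  case (min h1 h2)
  then obtain Q1 Q2 where "Q1 \<subseteq> P" "finite Q1" "h1 \<in> evaluation_lattice phi Q1"
    and "Q2 \<subseteq> P" "finite Q2" "h2 \<in> evaluation_lattice phi Q2"
    by blast
  then show ?case
    by (intro exI[of _ "Q1 \<union> Q2"])
      (auto intro: evaluation_lattice.min evaluation_lattice_mono)
qed

lemma continuous_on_evaluation_lattice:
  "h \<in> evaluation_lattice phi P \<Longrightarrow> continuous_on S h"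
  by (induction rule: evaluation_lattice.induct) (auto intro!: continuous_intros)

lemma evaluation_lattice_interpolates:
  fixes phi :: "'x \<Rightarrow> 'h::{real_inner,complete_space}"
  assumes "rkhs phi" and "f1 = f2 \<Longrightarrow> a = b"
  shows "\<exists>h\<in>evaluation_lattice phi UNIV. h f1 = a \<and> h f2 = b"
proof (cases "f1 = f2")
  case True
  then show ?thesis
    using evaluation_lattice.affine[where phi=phi and x=undefined and P=UNIV and a=a and c=0] assms(2)
    by auto
next
  case False
  then obtain x where x: "f1 \<bullet> phi x \<noteq> f2 \<bullet> phi x"
    using \<open>rkhs phi\<close> unfolding rkhs_def by blast
  define t where "t = (b - a) / (f2 \<bullet> phi x - f1 \<bullet> phi x)"
  have "t * (f2 \<bullet> phi x - f1 \<bullet> phi x) = b - a"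
    using x by (simp add: t_def)
  then show ?thesis
    using evaluation_lattice.affine[where phi=phi and x=x and P=UNIV
        and a="a - t * (f1 \<bullet> phi x)" and c=t]
    by (intro bexI) (auto simp: algebra_simps)
qed

lemma evaluation_lattice_uniform_approx:
  fixes phi :: "'x \<Rightarrow> 'h::{real_inner,complete_space}"
  assumes "rkhs phi" "compact C" "continuous_on C g" "e > 0"
  shows "\<exists>h\<in>evaluation_lattice phi UNIV. \<forall>f\<in>C. \<bar>h f - g f\<bar> < e"
proof (rule lattice_uniform_approx[OF _ _ _ assms(2-4)])
  show "(\<lambda>z. min (h1 z) (h2 z)) \<in> evaluation_lattice phi UNIV"
    if "h1 \<in> evaluation_lattice phi UNIV" "h2 \<in> evaluation_lattice phi UNIV" for h1 h2
    using that by (rule evaluation_lattice.min)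
  show "(\<lambda>z. max (h1 z) (h2 z)) \<in> evaluation_lattice phi UNIV"
    if "h1 \<in> evaluation_lattice phi UNIV" "h2 \<in> evaluation_lattice phi UNIV" for h1 h2
    using that by (rule evaluation_lattice.max)
  show "\<exists>h\<in>evaluation_lattice phi UNIV. h x = g x \<and> h y = g y" for x y
    by (rule evaluation_lattice_interpolates[OF \<open>rkhs phi\<close>]) simp
  show "evaluation_lattice phi UNIV \<noteq> {}"
    using evaluation_lattice.affine[where phi=phi and x=undefined and P=UNIV and a=0 and c=0]
    by blast
qed (rule continuous_on_evaluation_lattice)

definition affine_readouts :: "nat \<Rightarrow> ('a \<Rightarrow> nat \<Rightarrow> real) \<Rightarrow> ('a \<Rightarrow> real) set" where
  "affine_readouts d E = {h. \<exists>c a. \<forall>f. h f = (\<Sum>j<d. c j * E f j) + a}"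

lemma affine_readouts_coordinate:
  assumes "j < d"
  shows "(\<lambda>f. E f j) \<in> affine_readouts d E"
proof -
  have "(\<Sum>i<d. (if i = j then 1 else 0) * E f i) = (\<Sum>i<d. if i = j then E f i else 0)" for f
    by (rule sum.cong) auto
  then have "\<forall>f. E f j = (\<Sum>i<d. (if i = j then 1 else 0) * E f i) + 0"
    using assms by simp
  then show ?thesis
    unfolding affine_readouts_def by (intro CollectI exI)
qed

lemma affine_readouts_combination:
  assumes "h1 \<in> affine_readouts d E" "h2 \<in> affine_readouts d E"
    and "\<And>f. h f = a + b * h1 f + c * h2 f"
  shows "h \<in> affine_readouts d E"
proof -
  obtain p1 q1 p2 q2 where
    "\<And>f. h1 f = (\<Sum>j<d. p1 j * E f j) + q1" "\<And>f. h2 f = (\<Sum>j<d. p2 j * E f j) + q2"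
    using assms(1,2) unfolding affine_readouts_def by blast
  then have "\<forall>f. h f = (\<Sum>j<d. (b * p1 j + c * p2 j) * E f j) + (a + b * q1 + c * q2)"
    using assms(3) by (simp add: algebra_simps sum.distrib sum_distrib_left)
  then show ?thesis
    unfolding affine_readouts_def by (intro CollectI exI)
qed

lemma relu_layer_readouts:
  assumes "finite B" "B \<subseteq> affine_readouts d E"
  shows "\<exists>m W b. \<forall>h\<in>B. (\<lambda>f. relu (h f)) \<in> affine_readouts m (\<lambda>f. hidden_layer d m W b (E f))"
proof -
  obtain hs where hs: "set hs = B"
    using finite_list[OF assms(1)] by blast
  have "\<forall>i. \<exists>c a. i < length hs \<longrightarrow> (\<forall>f. (hs ! i) f = (\<Sum>j<d. c j * E f j) + a)"
    using assms(2) hs nth_mem unfolding affine_readouts_def by blast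
  then obtain W b where Wb: "\<And>i f. i < length hs \<Longrightarrow> (hs ! i) f = (\<Sum>j<d. W i j * E f j) + b i"
    by metis
  have "(\<lambda>f. relu (h f)) \<in> affine_readouts (length hs) (\<lambda>f. hidden_layer d (length hs) W b (E f))"
    if "h \<in> B" for h
  proof -
    obtain i where i: "i < length hs" "h = hs ! i"
      using \<open>h \<in> B\<close> hs by (metis in_set_conv_nth)
    have "relu (h f) = hidden_layer d (length hs) W b (E f) i" for f
      using i Wb by (simp add: hidden_layer_def)
    then show ?thesis
      using affine_readouts_coordinate[OF i(1)] by simp
  qed
  then show ?thesis
    by blast
qed

lemma hidden_layers_snoc:
  assumes "ds \<noteq> []"
  shows "hidden_layers (ds @ [m]) (Ws(length ds - 1 := W)) (bs(length ds - 1 := b)) v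
       = hidden_layer (last ds) m W b (hidden_layers ds Ws bs v)"
proof -
  define n where "n = length ds - 1"
  have len: "length ds = Suc n"
    using assms by (cases ds) (auto simp: n_def)
  have "foldl (\<lambda>u l. hidden_layer ((ds @ [m]) ! l) ((ds @ [m]) ! Suc l) ((Ws(n := W)) l)
          ((bs(n := b)) l) u) v [0..<n]
      = foldl (\<lambda>u l. hidden_layer (ds ! l) (ds ! Suc l) (Ws l) (bs l) u) v [0..<n]"
    by (rule foldl_cong) (auto simp: nth_append len)
  moreover have "(ds @ [m]) ! n = last ds" "(ds @ [m]) ! Suc n = m"
    using len assms by (simp_all add: nth_append last_conv_nth)
  ultimately show ?thesis
    unfolding hidden_layers_def n_def[symmetric] using len by simp
qed

definition sample_vector :: "('x \<Rightarrow> 'h::real_inner) \<Rightarrow> nat \<Rightarrow> (nat \<Rightarrow> 'x) \<Rightarrow> 'h \<Rightarrow> nat \<Rightarrow> real"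
  where "sample_vector phi S pts f = (\<lambda>s. if s < S then f \<bullet> phi (pts s) else 0)"

definition sample_functionals :: "('x \<Rightarrow> 'h::real_inner) \<Rightarrow> nat \<Rightarrow> (nat \<Rightarrow> 'x) \<Rightarrow> ('h \<Rightarrow> real) set"
  where "sample_functionals phi S pts = (\<lambda>s f. f \<bullet> phi (pts s)) ` {..<S}"

definition jointly_realizable ::
  "('x \<Rightarrow> 'h::real_inner) \<Rightarrow> nat \<Rightarrow> (nat \<Rightarrow> 'x) \<Rightarrow> ('h \<Rightarrow> real) set \<Rightarrow> bool" where
  "jointly_realizable phi S pts A \<longleftrightarrow> (\<exists>ds Ws bs. ds \<noteq> [] \<and> hd ds = S \<and>
     A \<subseteq> affine_readouts (last ds) (\<lambda>f. hidden_layers ds Ws bs (sample_vector phi S pts f)))"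

lemma jointly_realizable_subset:
  "jointly_realizable phi S pts B \<Longrightarrow> A \<subseteq> B \<Longrightarrow> jointly_realizable phi S pts A"
  unfolding jointly_realizable_def by blast

lemma jointly_realizable_sample_functionals:
  "jointly_realizable phi S pts (sample_functionals phi S pts)"
proof -
  have "sample_functionals phi S pts
      \<subseteq> affine_readouts S (\<lambda>f. hidden_layers [S] Ws bs (sample_vector phi S pts f))" for Ws bs
  proof
    fix h
    assume "h \<in> sample_functionals phi S pts"
    then obtain s where "s < S" "h = (\<lambda>f. f \<bullet> phi (pts s))"
      unfolding sample_functionals_def by blast
    moreover have "hidden_layers [S] Ws bs (sample_vector phi S pts f) s = f \<bullet> phi (pts s)" for f
      using \<open>s < S\<close> by (simp add: hidden_layers_def sample_vector_def)
    moreover have "(\<lambda>f. hidden_layers [S] Ws bs (sample_vector phi S pts f) s)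
        \<in> affine_readouts S (\<lambda>f. hidden_layers [S] Ws bs (sample_vector phi S pts f))"
      using \<open>s < S\<close> by (rule affine_readouts_coordinate)
    ultimately show "h \<in> affine_readouts S (\<lambda>f. hidden_layers [S] Ws bs (sample_vector phi S pts f))"
      by simp
  qed
  then show ?thesis
    unfolding jointly_realizable_def by (intro exI[of _ "[S]"]) simp
qed

lemma jointly_realizable_affine:
  assumes "jointly_realizable phi S pts A" "h \<in> A"
  shows "jointly_realizable phi S pts (insert (\<lambda>f. a + c * h f) A)"
proof -
  obtain ds Ws bs where ds: "ds \<noteq> []" "hd ds = S"
    and A: "A \<subseteq> affine_readouts (last ds) (\<lambda>f. hidden_layers ds Ws bs (sample_vector phi S pts f))"
    using assms(1) unfolding jointly_realizable_def by blast
  let ?R = "affine_readouts (last ds) (\<lambda>f. hidden_layers ds Ws bs (sample_vector phi S pts f))"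
  have h: "h \<in> ?R"
    using A assms(2) by blast
  have "(\<lambda>f. a + c * h f) \<in> ?R"
    by (rule affine_readouts_combination[OF h h, where a=a and b=c and c=0]) simp
  then show ?thesis
    unfolding jointly_realizable_def using ds A by blast
qed

lemma jointly_realizable_max_min:
  assumes "finite A" "jointly_realizable phi S pts A" "h1 \<in> A" "h2 \<in> A"
  shows "jointly_realizable phi S pts
           (insert (\<lambda>f. max (h1 f) (h2 f)) (insert (\<lambda>f. min (h1 f) (h2 f)) A))"
proof -
  obtain ds Ws bs where ds: "ds \<noteq> []" "hd ds = S"
    and A: "A \<subseteq> affine_readouts (last ds) (\<lambda>f. hidden_layers ds Ws bs (sample_vector phi S pts f))"
    using assms(2) unfolding jointly_realizable_def by blast
  define E where "E = (\<lambda>f. hidden_layers ds Ws bs (sample_vector phi S pts f))"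
  define B where "B = A \<union> (\<lambda>h f. - h f) ` A \<union> {\<lambda>f. h1 f - h2 f}"
  have A_E: "h \<in> affine_readouts (last ds) E" if "h \<in> A" for h
    using A that unfolding E_def by blast
  have "(\<lambda>f. - h f) \<in> affine_readouts (last ds) E" if "h \<in> A" for h
    using A_E[OF that] A_E[OF that]
    by (rule affine_readouts_combination[where a=0 and b="-1" and c=0]) simp
  moreover have "(\<lambda>f. h1 f - h2 f) \<in> affine_readouts (last ds) E"
    using A_E[OF assms(3)] A_E[OF assms(4)]
    by (rule affine_readouts_combination[where a=0 and b=1 and c="-1"]) simp
  ultimately have "B \<subseteq> affine_readouts (last ds) E"
    using A_E unfolding B_def by blast
  moreover have "finite B"
    using assms(1) unfolding B_def by simp
  ultimately obtain m W b where relu_B: "\<And>h. h \<in> B \<Longrightarrow>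
      (\<lambda>f. relu (h f)) \<in> affine_readouts m (\<lambda>f. hidden_layer (last ds) m W b (E f))"
    using relu_layer_readouts[of B "last ds" E] by blast
  define E' where "E' = (\<lambda>f. hidden_layer (last ds) m W b (E f))"
  have passed: "h \<in> affine_readouts m E'" if "h \<in> A" for h
  proof (rule affine_readouts_combination[where a=0 and b=1 and c="-1"])
    show "(\<lambda>f. relu (h f)) \<in> affine_readouts m E'" "(\<lambda>f. relu (- h f)) \<in> affine_readouts m E'"
      using relu_B[of h] relu_B[of "\<lambda>f. - h f"] that unfolding B_def E'_def by auto
  qed (simp add: relu_def max_def)
  have relu_diff: "(\<lambda>f. relu (h1 f - h2 f)) \<in> affine_readouts m E'"
    using relu_B unfolding B_def E'_def by blast
  have "(\<lambda>f. max (h1 f) (h2 f)) \<in> affine_readouts m E'"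
    by (rule affine_readouts_combination[OF passed[OF assms(4)] relu_diff, where a=0 and b=1 and c=1])
      (simp add: relu_def max_def)
  moreover have "(\<lambda>f. min (h1 f) (h2 f)) \<in> affine_readouts m E'"
    by (rule affine_readouts_combination[OF passed[OF assms(3)] relu_diff, where a=0 and b=1 and c="-1"])
      (simp add: relu_def max_def min_def)
  moreover have "hidden_layers (ds @ [m]) (Ws(length ds - 1 := W)) (bs(length ds - 1 := b))
      (sample_vector phi S pts f) = E' f" for f
    using hidden_layers_snoc[OF ds(1)] by (simp add: E'_def E_def)
  ultimately show ?thesis
    unfolding jointly_realizable_def using ds passed
    by (intro exI[of _ "ds @ [m]"] exI[of _ "Ws(length ds - 1 := W)"]
        exI[of _ "bs(length ds - 1 := b)"]) auto
qed

lemma jointly_realizable_insert_evaluation_lattice: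
  assumes "h \<in> evaluation_lattice phi (pts ` {..<S})" "finite A"
    and "sample_functionals phi S pts \<subseteq> A" "jointly_realizable phi S pts A"
  shows "jointly_realizable phi S pts (insert h A)"
  using assms
proof (induction arbitrary: A rule: evaluation_lattice.induct)
  case (affine x a c)
  then obtain s where "s < S" "x = pts s"
    by blast
  then have "(\<lambda>f. f \<bullet> phi x) \<in> A"
    using affine.prems(2) unfolding sample_functionals_def by blast
  then show ?case
    using jointly_realizable_affine affine.prems(3) by blast
next
  case (max h1 h2)
  have "jointly_realizable phi S pts (insert h1 A)"
    by (rule max.IH(1)) (use max.prems in auto)
  then have "jointly_realizable phi S pts (insert h2 (insert h1 A))"
    by (rule max.IH(2)[rotated 2]) (use max.prems in auto)
  then show ?case
    using jointly_realizable_max_min[of "insert h2 (insert h1 A)" phi S pts h1 h2] max.prems(1)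
    by (auto elim: jointly_realizable_subset)
next
  case (min h1 h2)
  have "jointly_realizable phi S pts (insert h1 A)"
    by (rule min.IH(1)) (use min.prems in auto)
  then have "jointly_realizable phi S pts (insert h2 (insert h1 A))"
    by (rule min.IH(2)[rotated 2]) (use min.prems in auto)
  then show ?case
    using jointly_realizable_max_min[of "insert h2 (insert h1 A)" phi S pts h1 h2] min.prems(1)
    by (auto elim: jointly_realizable_subset)
qed

lemma jointly_realizable_evaluation_lattice:
  assumes "finite B" "B \<subseteq> evaluation_lattice phi (pts ` {..<S})"
  shows "jointly_realizable phi S pts (B \<union> sample_functionals phi S pts)"
  using assms
proof (induction B rule: finite_induct)
  case empty
  then show ?case
    using jointly_realizable_sample_functionals by simp
next
  case (insert h B)
  have "finite (B \<union> sample_functionals phi S pts)"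
    using insert.hyps(1) by (simp add: sample_functionals_def)
  then show ?case
    using jointly_realizable_insert_evaluation_lattice[of h phi pts S] insert by simp
qed

lemma SNO_of_jointly_realizable:
  fixes H :: "'k::finite \<Rightarrow> 'h::real_inner \<Rightarrow> real"
  assumes "S > 0" "jointly_realizable phi S pts (range H)"
  shows "\<exists>F. SNO phi F \<and> (\<forall>f k. F f $ k = H k f)"
proof -
  obtain ds Ws bs where ds: "ds \<noteq> []" "hd ds = S"
    and H: "range H \<subseteq> affine_readouts (last ds) (\<lambda>f. hidden_layers ds Ws bs (sample_vector phi S pts f))"
    using assms(2) unfolding jointly_realizable_def by blast
  obtain c a where ca: "\<And>k f. H k f
      = (\<Sum>j<last ds. c k j * hidden_layers ds Ws bs (sample_vector phi S pts f) j) + a k"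
    using H unfolding affine_readouts_def by (simp add: image_subset_iff) metis
  define F where "F f = output_layer (last ds) c (\<chi> k. a k)
      (hidden_layers ds Ws bs (sample_vector phi S pts f))" for f
  have "SNO phi F"
    unfolding SNO_def F_def sample_vector_def using assms(1) ds by blast
  moreover have "F f $ k = H k f" for f k
    by (simp add: F_def output_layer_def ca)
  ultimately show ?thesis
    by blast
qed

lemma SNO_of_evaluation_lattice:
  fixes H :: "'k::finite \<Rightarrow> 'h::real_inner \<Rightarrow> real"
  assumes "\<And>k. H k \<in> evaluation_lattice phi P"
  shows "\<exists>F. SNO phi F \<and> (\<forall>f k. F f $ k = H k f)"
proof -
  have "\<forall>k. \<exists>Q. finite Q \<and> H k \<in> evaluation_lattice phi Q"
    using evaluation_lattice_finite_support assms by blast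
  from choice[OF this] obtain Q where Q: "\<forall>k. finite (Q k) \<and> H k \<in> evaluation_lattice phi (Q k)"
    by blast
  then have "finite (\<Union>k. Q k)"
    by simp
  then obtain xs where xs: "set xs = (\<Union>k. Q k)"
    using finite_list by blast
  define pts where "pts s = (undefined # xs) ! s" for s
  define S where "S = Suc (length xs)"
  have "Q k \<subseteq> pts ` {..<S}" for k
  proof
    fix x
    assume "x \<in> Q k"
    then obtain i where "i < length xs" "x = xs ! i"
      using xs by (metis UNIV_I UN_I in_set_conv_nth)
    then have "Suc i < S" "x = pts (Suc i)"
      by (simp_all add: S_def pts_def)
    then show "x \<in> pts ` {..<S}"
      by blast
  qed
  then have "range H \<subseteq> evaluation_lattice phi (pts ` {..<S})"
    using Q evaluation_lattice_mono by blast
  with jointly_realizable_evaluation_lattice[of "range H"]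
  have "jointly_realizable phi S pts (range H \<union> sample_functionals phi S pts)"
    by simp
  then have "jointly_realizable phi S pts (range H)"
    by (rule jointly_realizable_subset) blast
  then show ?thesis
    by (rule SNO_of_jointly_realizable[rotated]) (simp add: S_def)
qed

lemma dist_lt_of_components:
  fixes x y :: "real^'n"
  assumes "\<And>k. \<bar>x $ k - y $ k\<bar> < e / CARD('n)"
  shows "dist x y < e"
proof -
  have "dist x y \<le> (\<Sum>k\<in>UNIV. \<bar>(x - y) $ k\<bar>)"
    unfolding dist_norm by (rule norm_le_l1_cart)
  also have "\<dots> < (\<Sum>k\<in>(UNIV::'n set). e / CARD('n))"
    using assms by (intro sum_strict_mono) auto
  also have "\<dots> = e"
    by simp
  finally show ?thesis .
qed

theorem mainTheorem7:
  fixes phi :: "'x \<Rightarrow> 'h::{real_inner,complete_space}"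
    and \<Lambda> :: "nat set" and xs :: "nat \<Rightarrow> 'x"
    and \<K> :: "'h set"
  assumes "rkhs phi"
    and "separable_space TYPE('h)"
    and "complete_interpolating_sampling phi \<Lambda> xs"
    and "\<K> \<noteq> {}"
    and "locally_compact_space (top_of_set \<K>)"
  shows "\<forall>g :: 'h \<Rightarrow> real^'k::finite. continuous_on \<K> g \<longrightarrow>
           (\<forall>C \<epsilon>. compact C \<and> C \<subseteq> \<K> \<and> \<epsilon> > 0 \<longrightarrow>
              (\<exists>F. SNO phi F \<and> (\<forall>f\<in>C. dist (F f) (g f) < \<epsilon>)))"
proof (intro allI impI)
  fix g :: "'h \<Rightarrow> real^'k" and C and \<epsilon> :: real
  assume g: "continuous_on \<K> g" and C: "compact C \<and> C \<subseteq> \<K> \<and> \<epsilon> > 0"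
  have "\<exists>h\<in>evaluation_lattice phi UNIV. \<forall>f\<in>C. \<bar>h f - g f $ k\<bar> < \<epsilon> / CARD('k)" for k
  proof (rule evaluation_lattice_uniform_approx[OF \<open>rkhs phi\<close>])
    show "continuous_on C (\<lambda>f. g f $ k)"
      using continuous_on_subset[OF g] C by (intro continuous_on_component) blast
  qed (use C in simp_all)
  then obtain H where H: "\<And>k. H k \<in> evaluation_lattice phi UNIV"
    and approx: "\<And>k f. f \<in> C \<Longrightarrow> \<bar>H k f - g f $ k\<bar> < \<epsilon> / CARD('k)"
    by metis
  obtain F where "SNO phi F" "\<And>f k. F f $ k = H k f"
    using SNO_of_evaluation_lattice[where H=H and P=UNIV] H by blast
  then show "\<exists>F. SNO phi F \<and> (\<forall>f\<in>C. dist (F f) (g f) < \<epsilon>)"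
    using approx by (metis dist_lt_of_components vector_minus_component)
qed

end
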